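(* For every $\alpha\in(0,1)$, the function $\beta\mapsto 1/v(\beta)$ is convex on $(1,1/\alpha)$, where $v(\beta)$ is given by $$\frac1{v(\beta)}=\frac{\beta+1}{\beta-1}+\frac{1-\alpha}{1+\alpha}\left(\frac{\beta+3}{2(\beta-1)}+\frac{\beta(\beta+1)}{(\beta-1)^2}(s_+-s_-)+C\,s_-\right),$$ with $s_+=\frac{1-\alpha}{1-\alpha\beta}$, $s_-=\frac{1-\alpha}{1-\alpha/\beta}$, $C=\frac{2\beta}{\beta-1}-\frac{\beta-\alpha}{\beta-\alpha^2}$. Consequently $v$ is a unimodal function of $\beta$ on $(1,1/\alpha)$ (nondecreasing up to some $\beta_{\max}$ and nonincreasing thereafter), with $v(\beta)\to0$ as $\beta\downarrow1$ and as $\beta\uparrow1/\alpha$.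
   Context: Here $v(\beta)$ is the asymptotic speed of the biased random walk on the random spanning tree of the ladder graph with parameter $\alpha=c+1-\sqrt{c^2+2c}$, as given by the displayed formula for $\beta\in(1,1/\alpha)$. *)

theory Defs
  imports "HOL-Analysis.Analysis"
begin

definition s_plus :: "real \<Rightarrow> real \<Rightarrow> real" where
  "s_plus \<alpha> \<beta> = (1 - \<alpha>) / (1 - \<alpha> * \<beta>)"

definition s_minus :: "real \<Rightarrow> real \<Rightarrow> real" where
  "s_minus \<alpha> \<beta> = (1 - \<alpha>) / (1 - \<alpha> / \<beta>)"

definition C_const :: "real \<Rightarrow> real \<Rightarrow> real" where
  "C_const \<alpha> \<beta> = 2 * \<beta> / (\<beta> - 1) - (\<beta> - \<alpha>) / (\<beta> - \<alpha>\<^sup>2)"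

definition inv_speed :: "real \<Rightarrow> real \<Rightarrow> real" where
  "inv_speed \<alpha> \<beta> =
     (\<beta> + 1) / (\<beta> - 1)
     + (1 - \<alpha>) / (1 + \<alpha>) *
       ((\<beta> + 3) / (2 * (\<beta> - 1))
        + \<beta> * (\<beta> + 1) / (\<beta> - 1)\<^sup>2 * (s_plus \<alpha> \<beta> - s_minus \<alpha> \<beta>)
        + C_const \<alpha> \<beta> * s_minus \<alpha> \<beta>)"

definition speed :: "real \<Rightarrow> real \<Rightarrow> real" where
  "speed \<alpha> \<beta> = 1 / inv_speed \<alpha> \<beta>"

end

theory Submission
  imports Defs
begin

text \<open>
  On \<open>1 < \<beta> < 1/\<alpha>\<close> the partial fraction decomposition of \<open>1/v\<close> has simple poles at the
  endpoints \<open>1\<close> and \<open>1/\<alpha>\<close> with positive coefficients, and at \<open>\<alpha>\<close> and \<open>\<alpha>\<^sup>2\<close>, below the interval,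
  with negative coefficients whose total is at most the coefficient at \<open>1\<close>. Since \<open>(\<beta> - \<alpha>)\<^sup>3\<close> and
  \<open>(\<beta> - \<alpha>\<^sup>2)\<^sup>3\<close> exceed \<open>(\<beta> - 1)\<^sup>3\<close>, the pole at \<open>1\<close> dominates the negative contributions to the
  second derivative, which is therefore nonnegative; the same comparison shows \<open>1/v > 0\<close>. The
  endpoint poles make \<open>1/v\<close> tend to \<open>\<infinity>\<close> at both ends, so the convex function \<open>1/v\<close> attains its
  minimum inside the interval, decreasing before and increasing after it.
\<close>

lemma convex_on_cong:
  assumes "convex_on S f" "\<And>x. x \<in> S \<Longrightarrow> f x = g x"
  shows "convex_on S g"
proof -
  have "convex S" using assms(1) by (simp add: convex_on_def)
  then show ?thesis
    using assms unfolding convex_on_def by (metis convexD)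
qed

lemma convex_on_segment_le_endpoint:
  fixes f :: "'a::real_vector \<Rightarrow> real"
  assumes "convex_on S f" "x \<in> S" "m \<in> S" "f m \<le> f x" "y \<in> closed_segment x m"
  shows "f y \<le> f x"
proof -
  obtain t where t: "0 \<le> t" "t \<le> 1" and y: "y = (1 - t) *\<^sub>R x + t *\<^sub>R m"
    using assms(5) unfolding in_segment by blast
  have "f y \<le> (1 - t) * f x + t * f m"
    unfolding y using convex_onD[OF assms(1) t assms(2,3)] .
  also have "\<dots> \<le> (1 - t) * f x + t * f x"
    using assms(4) t by (intro add_left_mono mult_left_mono) auto
  finally show ?thesis by (simp add: algebra_simps)
qed

lemma continuous_attains_inf_coercive:
  fixes f :: "real \<Rightarrow> real"
  assumes "l < u" "continuous_on {l<..<u} f"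
    and "filterlim f at_top (at_right l)" "filterlim f at_top (at_left u)"
  shows "\<exists>m\<in>{l<..<u}. \<forall>x\<in>{l<..<u}. f m \<le> f x"
proof -
  define c where "c = (l + u) / 2"
  have c: "l < c" "c < u" using assms(1) by (auto simp: c_def)
  have "eventually (\<lambda>x. f c \<le> f x) (at_right l)" "eventually (\<lambda>x. f c \<le> f x) (at_left u)"
    using assms(3,4) by (simp_all add: filterlim_at_top)
  then obtain l' u' where
      l': "l < l'" "\<And>x. l < x \<Longrightarrow> x < l' \<Longrightarrow> f c \<le> f x" and
      u': "u' < u" "\<And>x. u' < x \<Longrightarrow> x < u \<Longrightarrow> f c \<le> f x"
    unfolding eventually_at_right_field eventually_at_left_field by blast
  define lo where "lo = min c ((l + l') / 2)"
  define hi where "hi = max c ((u' + u) / 2)"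
  have bounds: "l < lo" "lo \<le> c" "lo < l'" "c \<le> hi" "hi < u" "u' < hi"
    using c l' u' by (auto simp: lo_def hi_def min_def max_def)
  have sub: "{lo..hi} \<subseteq> {l<..<u}" using bounds by auto
  obtain m where m: "m \<in> {lo..hi}" "\<And>x. x \<in> {lo..hi} \<Longrightarrow> f m \<le> f x"
    using continuous_attains_inf[OF compact_Icc _ continuous_on_subset[OF assms(2) sub]] bounds
    by fastforce
  have "f m \<le> f x" if "x \<in> {l<..<u}" for x
  proof (cases "x \<in> {lo..hi}")
    case False
    then have "x < l' \<or> u' < x" using bounds by auto
    then have "f c \<le> f x" using that l'(2) u'(2) by auto
    moreover have "f m \<le> f c" using m bounds by simp
    ultimately show ?thesis by simp
  qed (use m in auto)
  then show ?thesis using m sub by blast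
qed

lemma convex_on_unimodal_coercive:
  fixes f :: "real \<Rightarrow> real"
  assumes "l < u" "convex_on {l<..<u} f"
    and "filterlim f at_top (at_right l)" "filterlim f at_top (at_left u)"
  shows "\<exists>m\<in>{l<..<u}. antimono_on {l<..m} f \<and> mono_on {m..<u} f"
proof -
  have "continuous_on {l<..<u} f" using assms(2) by (simp add: convex_on_continuous)
  then obtain m where m: "m \<in> {l<..<u}" "\<And>x. x \<in> {l<..<u} \<Longrightarrow> f m \<le> f x"
    using continuous_attains_inf_coercive[OF assms(1) _ assms(3,4)] by blast
  have "antimono_on {l<..m} f"
  proof (rule monotone_onI)
    fix x y assume "x \<in> {l<..m}" "y \<in> {l<..m}" "x \<le> y"
    then have "x \<in> {l<..<u}" "y \<in> closed_segment x m"
      using m(1) by (auto simp: closed_segment_eq_real_ivl)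
    then show "f y \<le> f x"
      using convex_on_segment_le_endpoint[OF assms(2) _ m(1)] m(2) by blast
  qed
  moreover have "mono_on {m..<u} f"
  proof (rule monotone_onI)
    fix x y assume "x \<in> {m..<u}" "y \<in> {m..<u}" "x \<le> y"
    then have "y \<in> {l<..<u}" "x \<in> closed_segment y m"
      using m(1) by (auto simp: closed_segment_eq_real_ivl)
    then show "f x \<le> f y"
      using convex_on_segment_le_endpoint[OF assms(2) _ m(1)] m(2) by blast
  qed
  ultimately show ?thesis using m(1) by blast
qed

lemma mono_on_one_divide_if_antimono_on:
  fixes f :: "'a::order \<Rightarrow> real"
  assumes "antimono_on S f" "\<And>x. x \<in> S \<Longrightarrow> 0 < f x"
  shows "mono_on S (\<lambda>x. 1 / f x)"
  using assms by (auto intro!: monotone_onI divide_left_mono dest: monotone_onD)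

lemma antimono_on_one_divide_if_mono_on:
  fixes f :: "'a::order \<Rightarrow> real"
  assumes "mono_on S f" "\<And>x. x \<in> S \<Longrightarrow> 0 < f x"
  shows "antimono_on S (\<lambda>x. 1 / f x)"
  using assms by (auto intro!: monotone_onI divide_left_mono dest: monotone_onD)

lemma filterlim_divide_at_top_at_right:
  fixes c p :: real
  assumes "0 < c"
  shows "LIM x at_right p. c / (x - p) :> at_top"
proof -
  have "LIM x at_right 0. c * inverse x :> at_top"
    using filterlim_tendsto_pos_mult_at_top[OF tendsto_const assms filterlim_inverse_at_top_right] .
  then show ?thesis
    unfolding filterlim_at_right_to_0[of _ _ p] by (simp add: divide_inverse)
qed

lemma filterlim_divide_at_top_at_left:
  fixes c p :: real
  assumes "0 < c"
  shows "LIM x at_left p. c / (p - x) :> at_top"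
  using filterlim_divide_at_top_at_right[OF assms, of "- p"]
  unfolding filterlim_at_left_to_right[of _ _ p] by (simp add: add.commute)

lemma divide_power_diff_le:
  fixes D p l x :: real
  assumes "0 \<le> D" "p \<le> l" "l < x"
  shows "D / (x - p) ^ n \<le> D / (x - l) ^ n"
  using assms by (intro divide_left_mono power_mono mult_pos_pos) auto

lemma pole_terms_nonneg:
  fixes A B D E l u p q x :: real
  assumes "0 \<le> B" "0 \<le> D" "0 \<le> E" "D + E \<le> A" "p \<le> l" "q \<le> l" "x \<in> {l<..<u}"
  shows "0 \<le> A / (x - l) ^ n + B / (u - x) ^ n - D / (x - p) ^ n - E / (x - q) ^ n"
proof -
  have "0 \<le> (A - D - E) / (x - l) ^ n" using assms by simp
  also have "\<dots> = A / (x - l) ^ n - D / (x - l) ^ n - E / (x - l) ^ n"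
    by (simp add: diff_divide_distrib)
  also have "\<dots> \<le> A / (x - l) ^ n - D / (x - p) ^ n - E / (x - q) ^ n"
    using divide_power_diff_le[of D p l x n] divide_power_diff_le[of E q l x n] assms by simp
  also have "\<dots> \<le> A / (x - l) ^ n + B / (u - x) ^ n - D / (x - p) ^ n - E / (x - q) ^ n"
    using assms by simp
  finally show ?thesis .
qed

definition pole_sum ::
    "real \<Rightarrow> real \<Rightarrow> real \<Rightarrow> real \<Rightarrow> real \<Rightarrow> real \<Rightarrow> real \<Rightarrow> real \<Rightarrow> real \<Rightarrow> real \<Rightarrow> real" where
  "pole_sum k A l B u D p E q x = k + A / (x - l) + B / (u - x) - D / (x - p) - E / (x - q)"

lemma pole_sum_ge_const:
  assumes "0 \<le> B" "0 \<le> D" "0 \<le> E" "D + E \<le> A" "p \<le> l" "q \<le> l" "x \<in> {l<..<u}"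
  shows "k \<le> pole_sum k A l B u D p E q x"
  using pole_terms_nonneg[OF assms, of 1] by (simp add: pole_sum_def)

lemma convex_on_pole_sum:
  assumes "0 \<le> B" "0 \<le> D" "0 \<le> E" "D + E \<le> A" "p \<le> l" "q \<le> l"
  shows "convex_on {l<..<u} (pole_sum k A l B u D p E q)"
proof (rule f''_ge0_imp_convex)
  fix x :: real assume x: "x \<in> {l<..<u}"
  then have x_ne: "x \<noteq> l" "x \<noteq> u" "x \<noteq> p" "x \<noteq> q" using assms by auto
  then show "(pole_sum k A l B u D p E q has_real_derivative
      - A / (x - l)^2 + B / (u - x)^2 + D / (x - p)^2 + E / (x - q)^2) (at x)"
    unfolding pole_sum_def[abs_def]
    by (auto intro!: derivative_eq_intros) (simp_all add: divide_simps eval_nat_numeral)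
  have below: "c * (2 * x - 2 * y) / (x - y) ^ 4 = 2 * c / (x - y) ^ 3" if "x \<noteq> y" for c y :: real
    using that by (simp add: divide_simps eval_nat_numeral)
  have above: "c * (2 * x - 2 * y) / (y - x) ^ 4 = - (2 * c / (y - x) ^ 3)" if "x \<noteq> y" for c y :: real
    using that by (simp add: divide_simps eval_nat_numeral) (simp add: algebra_simps)
  show "((\<lambda>x. - A / (x - l)^2 + B / (u - x)^2 + D / (x - p)^2 + E / (x - q)^2) has_real_derivative
      2 * (A / (x - l)^3 + B / (u - x)^3 - D / (x - p)^3 - E / (x - q)^3)) (at x)"
    using x_ne by (auto intro!: derivative_eq_intros simp: below above)
  show "0 \<le> 2 * (A / (x - l)^3 + B / (u - x)^3 - D / (x - p)^3 - E / (x - q)^3)"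
    using pole_terms_nonneg[OF assms x, of 3] by (rule mult_nonneg_nonneg[rotated]) simp
qed simp

lemma pole_sum_at_top_at_right:
  assumes "0 < A" "u \<noteq> l" "p \<noteq> l" "q \<noteq> l"
  shows "filterlim (pole_sum k A l B u D p E q) at_top (at_right l)"
proof -
  have "((\<lambda>x. k + B / (u - x) - D / (x - p) - E / (x - q))
      \<longlongrightarrow> k + B / (u - l) - D / (l - p) - E / (l - q)) (at_right l)"
    using assms by (intro tendsto_intros) auto
  from filterlim_tendsto_add_at_top[OF this filterlim_divide_at_top_at_right[OF assms(1)]]
  show ?thesis by (simp add: pole_sum_def[abs_def] algebra_simps)
qed

lemma pole_sum_at_top_at_left:
  assumes "0 < B" "l \<noteq> u" "p \<noteq> u" "q \<noteq> u"
  shows "filterlim (pole_sum k A l B u D p E q) at_top (at_left u)"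
proof -
  have "((\<lambda>x. k + A / (x - l) - D / (x - p) - E / (x - q))
      \<longlongrightarrow> k + A / (u - l) - D / (u - p) - E / (u - q)) (at_left u)"
    using assms by (intro tendsto_intros) auto
  from filterlim_tendsto_add_at_top[OF this filterlim_divide_at_top_at_left[OF assms(1)]]
  show ?thesis by (simp add: pole_sum_def[abs_def] algebra_simps)
qed

lemma eq_pole_sum_imp_convex_coercive:
  fixes f :: "real \<Rightarrow> real"
  assumes "0 < k" "0 < A" "0 < B" "0 \<le> D" "0 \<le> E" "D + E \<le> A" "p < l" "q < l" "l < u"
    and eq: "\<And>x. x \<in> {l<..<u} \<Longrightarrow> f x = pole_sum k A l B u D p E q x"
  shows "convex_on {l<..<u} f \<and> (\<forall>x\<in>{l<..<u}. 0 < f x)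
    \<and> filterlim f at_top (at_right l) \<and> filterlim f at_top (at_left u)"
proof (intro conjI ballI)
  show "convex_on {l<..<u} f"
    using convex_on_pole_sum[of B D E A p l q u k] assms by (auto intro: convex_on_cong)
  show "0 < f x" if "x \<in> {l<..<u}" for x
    using pole_sum_ge_const[of B D E A p l q x u k] assms that by force
  have "eventually (\<lambda>x. pole_sum k A l B u D p E q x = f x) (at_right l)"
    "eventually (\<lambda>x. pole_sum k A l B u D p E q x = f x) (at_left u)"
    using assms by (auto intro!: eventually_at_rightI[of l u] eventually_at_leftI[of l u])
  then show "filterlim f at_top (at_right l)" "filterlim f at_top (at_left u)"
    using pole_sum_at_top_at_right[of A u l p q k B D E] pole_sum_at_top_at_left[of B l u p q k A D E]
      assms by (auto intro: filterlim_mono_eventually[OF _ order_refl order_refl])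
qed

lemma reciprocal_convex_coercive_unimodal:
  fixes f :: "real \<Rightarrow> real"
  assumes "l < u" and conv: "convex_on {l<..<u} f" and pos: "\<And>x. x \<in> {l<..<u} \<Longrightarrow> 0 < f x"
    and lim: "filterlim f at_top (at_right l)" "filterlim f at_top (at_left u)"
  shows "(\<exists>m\<in>{l<..<u}. mono_on {l<..m} (\<lambda>x. 1 / f x) \<and> antimono_on {m..<u} (\<lambda>x. 1 / f x))
    \<and> ((\<lambda>x. 1 / f x) \<longlongrightarrow> 0) (at_right l) \<and> ((\<lambda>x. 1 / f x) \<longlongrightarrow> 0) (at_left u)"
proof -
  obtain m where m: "m \<in> {l<..<u}" "antimono_on {l<..m} f" "mono_on {m..<u} f"
    using convex_on_unimodal_coercive[OF assms(1) conv lim] by blast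
  have "mono_on {l<..m} (\<lambda>x. 1 / f x)"
    using m(1) by (intro mono_on_one_divide_if_antimono_on[OF m(2)] pos) auto
  moreover have "antimono_on {m..<u} (\<lambda>x. 1 / f x)"
    using m(1) by (intro antimono_on_one_divide_if_mono_on[OF m(3)] pos) auto
  moreover have "((\<lambda>x. 1 / f x) \<longlongrightarrow> 0) (at_right l)" "((\<lambda>x. 1 / f x) \<longlongrightarrow> 0) (at_left u)"
    using tendsto_inverse_0_at_top[OF lim(1)] tendsto_inverse_0_at_top[OF lim(2)]
    by (simp_all add: inverse_eq_divide)
  ultimately show ?thesis using m(1) by blast
qed

lemma inv_speed_partial_fractions:
  fixes a b :: real
  assumes "0 < a" "a < 1" "1 < b" "b < 1/a"
  shows "inv_speed a b = pole_sum ((3 + a) / (2 * (1 + a))) ((6 + 2 * a) / (1 + a)) 1 (1 / a) (1 / a)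
    (a^2 * (3 - a) / (1 + a)) a (a^2 * (1 - a)^2 / (1 + a)) (a^2) b"
proof -
  have "a * b < 1" using assms by (simp add: field_simps)
  moreover have "a^2 < 1" using assms by (simp add: power_less_one_iff)
  ultimately have nz: "b - 1 \<noteq> 0" "1 - a * b \<noteq> 0" "b - a \<noteq> 0" "b - a^2 \<noteq> 0" "1 + a \<noteq> 0"
    "b \<noteq> 0" "a \<noteq> 0"
    using assms by auto
  have s_minus: "s_minus a b = (1 - a) * b / (b - a)"
    unfolding s_minus_def using nz by (simp add: divide_simps; simp add: algebra_simps)
  have t3: "b * (b + 1) / (b - 1)\<^sup>2 * (s_plus a b - s_minus a b)
      = a * b * (1 - a) * (b + 1)^2 / ((b - 1) * (1 - a * b) * (b - a))"
    unfolding s_minus s_plus_def using nz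
    by (simp add: divide_simps power2_eq_square; simp add: algebra_simps)
  have t4: "C_const a b * s_minus a b = 2 * (1 - a) * b^2 / ((b - 1) * (b - a)) - (1 - a) * b / (b - a^2)"
    unfolding s_minus C_const_def using nz
    by (simp add: divide_simps power2_eq_square; simp add: algebra_simps)
  have pole: "(1 / a) / (1 / a - b) = 1 / (1 - a * b)"
    using nz by (simp add: divide_simps mult.commute)
  have "inv_speed a b = (b + 1) / (b - 1) + (1 - a) / (1 + a) * ((b + 3) / (2 * (b - 1))
      + a * b * (1 - a) * (b + 1)^2 / ((b - 1) * (1 - a * b) * (b - a))
      + (2 * (1 - a) * b^2 / ((b - 1) * (b - a)) - (1 - a) * b / (b - a^2)))"
    unfolding inv_speed_def t3 t4 by simp
  also have "\<dots> = pole_sum ((3 + a) / (2 * (1 + a))) ((6 + 2 * a) / (1 + a)) 1 (1 / a) (1 / a)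
    (a^2 * (3 - a) / (1 + a)) a (a^2 * (1 - a)^2 / (1 + a)) (a^2) b"
    unfolding pole_sum_def pole using nz by (simp add: divide_simps power2_eq_square; simp add: algebra_simps)
  finally show ?thesis .
qed

lemma inv_speed_residues_le:
  fixes a :: real
  assumes "0 < a" "a < 1"
  shows "a^2 * (3 - a) / (1 + a) + a^2 * (1 - a)^2 / (1 + a) \<le> (6 + 2 * a) / (1 + a)"
proof -
  have "a^2 \<le> 1" using assms by (simp add: power_le_one)
  then have "a^2 * (3 - a) \<le> 3" "a^2 * (1 - a)^2 \<le> 1"
    using assms by (auto intro!: mult_le_one power_le_one simp: power_mult_distrib[symmetric]
        intro: order.trans[OF mult_right_mono[of "a^2" 1 "3 - a"]])
  then show ?thesis using assms by (simp add: divide_simps)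
qed

lemma inv_speed_pole_sum:
  fixes a :: real
  assumes "0 < a" "a < 1"
  obtains k A B D E where "0 < k" "0 < A" "0 < B" "0 \<le> D" "0 \<le> E" "D + E \<le> A"
    and "\<And>b. b \<in> {1<..<1/a} \<Longrightarrow> inv_speed a b = pole_sum k A 1 B (1/a) D a E (a^2) b"
proof
  show "\<And>b. b \<in> {1<..<1/a} \<Longrightarrow> inv_speed a b = pole_sum ((3 + a) / (2 * (1 + a)))
      ((6 + 2 * a) / (1 + a)) 1 (1 / a) (1 / a) (a^2 * (3 - a) / (1 + a)) a (a^2 * (1 - a)^2 / (1 + a)) (a^2) b"
    using inv_speed_partial_fractions[OF assms] by simp
qed (use assms inv_speed_residues_le[OF assms] in auto)

lemma inv_speed_poles_ordered:
  fixes a :: real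
  assumes "0 < a" "a < 1"
  shows "a^2 < 1" "a < 1/a" "a^2 < 1/a" "1 < 1/a"
proof -
  have "a * a < 1" "a^2 * a < 1"
    using assms mult_strict_mono[of a 1 a 1] mult_strict_mono[of "a^2" 1 a 1]
    by (simp_all add: power_less_one_iff)
  then show "a < 1/a" "a^2 < 1/a" using assms by (simp_all add: field_simps)
qed (use assms in \<open>simp_all add: power_less_one_iff\<close>)

theorem mainTheorem2:
  fixes \<alpha> :: real
  assumes "0 < \<alpha>" and "\<alpha> < 1"
  shows "convex_on {1<..<1/\<alpha>} (\<lambda>\<beta>. 1 / speed \<alpha> \<beta>)
    \<and> (\<exists>\<beta>max \<in> {1<..<1/\<alpha>}.
          mono_on {1<..\<beta>max} (speed \<alpha>) \<and> antimono_on {\<beta>max..<1/\<alpha>} (speed \<alpha>))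
    \<and> (speed \<alpha> \<longlongrightarrow> 0) (at_right 1)
    \<and> (speed \<alpha> \<longlongrightarrow> 0) (at_left (1/\<alpha>))"
proof -
  obtain k A B D E where coeffs: "0 < k" "0 < A" "0 < B" "0 \<le> D" "0 \<le> E" "D + E \<le> A"
    and eq: "\<And>\<beta>. \<beta> \<in> {1<..<1/\<alpha>} \<Longrightarrow> inv_speed \<alpha> \<beta> = pole_sum k A 1 B (1/\<alpha>) D \<alpha> E (\<alpha>^2) \<beta>"
    using inv_speed_pole_sum[OF assms] by metis
  have "convex_on {1<..<1/\<alpha>} (inv_speed \<alpha>) \<and> (\<forall>\<beta>\<in>{1<..<1/\<alpha>}. 0 < inv_speed \<alpha> \<beta>)
      \<and> filterlim (inv_speed \<alpha>) at_top (at_right 1) \<and> filterlim (inv_speed \<alpha>) at_top (at_left (1/\<alpha>))"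
    using coeffs eq assms inv_speed_poles_ordered[OF assms]
    by (intro eq_pole_sum_imp_convex_coercive) auto
  then have "\<exists>m\<in>{1<..<1/\<alpha>}. mono_on {1<..m} (speed \<alpha>) \<and> antimono_on {m..<1/\<alpha>} (speed \<alpha>)"
      "(speed \<alpha> \<longlongrightarrow> 0) (at_right 1)" "(speed \<alpha> \<longlongrightarrow> 0) (at_left (1/\<alpha>))"
      "convex_on {1<..<1/\<alpha>} (\<lambda>\<beta>. 1 / speed \<alpha> \<beta>)"
    using reciprocal_convex_coercive_unimodal[of 1 "1/\<alpha>" "inv_speed \<alpha>"] inv_speed_poles_ordered[OF assms]
    by (simp_all add: speed_def[abs_def])
  then show ?thesis by blast
qed

end
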